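(* The simply connected Lie group $N_6=\mathrm{Heis}_3(\mathbb{R}[\epsilon])$ with Lie algebra $\mathcal{N}_6$ does not satisfy the partial automatic continuity.
   Context: $\mathbb{R}[\epsilon]=\mathbb{R}[X]/(X^2)$ is the ring of dual numbers. $\mathcal{N}_6=\mathrm{heis}_3(\mathbb{R}[\epsilon])=\{aX+bY+cZ: a,b,c\in\mathbb{R}[\epsilon]\}$ with $[X,Y]=Z$; as a real Lie algebra it has basis $X_1=X$, $X_2=Y$, $X_3=\epsilon Y$, $X_4=-\epsilon X$, $Z_1=Z$, $Z_2=\epsilon Z$ with nonzero brackets $[X_1,X_2]=Z_1$, $[X_1,X_3]=Z_2$, $[X_2,X_4]=Z_2$. For a simply connected nilpotent Lie group $N$ with Lie algebra $\mathcal{N}$: a central automorphism is an abstract group automorphism $F$ with $x^{-1}F(x)\in Z(N)$ for all $x$; a Lie group automorphism is a continuous automorphism. Field automorphisms: if $\mathcal{N}=\mathcal{N}_1\oplus\cdots\oplus\mathcal{N}_k$ (ideals), for each $\mathcal{N}_i$ that is the realification of a complex Lie algebra choose a $\mathbb{C}$-basis and a field automorphism $\varphi$ of $\mathbb{C}$ fixing the structure constants and let $\sigma_i$ apply $\varphi$ to coordinates, otherwise $\sigma_i=\mathrm{id}$; $\exp\circ(\sigma_1\times\cdots\times\sigma_k)\circ\exp^{-1}$ is a field automorphism of $N$. $N$ satisfies the partial automatic continuity if every abstract group automorphism has the form $\mu\circ\overline{F}\circ\Phi$ with $\mu$ central, $\overline{F}$ a Lie group automorphism, $\Phi$ a field automorphism.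 *)

theory Defs
  imports "HOL-Analysis.Analysis"
begin

text \<open>Dual numbers R[eps] = R[X]/(X^2): the pair (a0,a1) stands for a0 + a1 eps.\<close>
type_synonym dual = "real \<times> real"

definition dmul :: "dual \<Rightarrow> dual \<Rightarrow> dual" where
  "dmul a b = (fst a * fst b, fst a * snd b + snd a * fst b)"

text \<open>In the Lie algebra (a,b,c) stands for aX + bY + cZ (a real 6-dimensional vector space,
  with the product vector space structure). In the group, (a,b,c) stands for the unipotent
  upper triangular matrix [[1,a,c],[0,1,b],[0,0,1]] over R[eps]; the topology is the product
  (Euclidean) topology on R^6. This is the simply connected Lie group with Lie algebra N_6.\<close>
type_synonym n6 = "dual \<times> dual \<times> dual"

definition n6_bracket :: "n6 \<Rightarrow> n6 \<Rightarrow> n6" where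
  "n6_bracket u v = (case u of (a, b, c) \<Rightarrow> case v of (a', b', c') \<Rightarrow>
       (0, 0, dmul a b' - dmul a' b))"

definition n6_mult :: "n6 \<Rightarrow> n6 \<Rightarrow> n6" where
  "n6_mult u v = (case u of (a, b, c) \<Rightarrow> case v of (a', b', c') \<Rightarrow>
       (a + a', b + b', c + c' + dmul a b'))"

definition n6_inv :: "n6 \<Rightarrow> n6" where
  "n6_inv u = (case u of (a, b, c) \<Rightarrow> (- a, - b, dmul a b - c))"

definition n6_center :: "n6 set" where
  "n6_center = {z. \<forall>x. n6_mult x z = n6_mult z x}"

text \<open>Exponential map of N_6 and its inverse: exp(M) = I + M + M^2/2.\<close>
definition n6_exp :: "n6 \<Rightarrow> n6" where
  "n6_exp u = (case u of (a, b, c) \<Rightarrow> (a, b, c + (1/2) *\<^sub>R dmul a b))"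

definition n6_log :: "n6 \<Rightarrow> n6" where
  "n6_log u = (case u of (a, b, c) \<Rightarrow> (a, b, c - (1/2) *\<^sub>R dmul a b))"

definition n6_abstract_aut :: "(n6 \<Rightarrow> n6) \<Rightarrow> bool" where
  "n6_abstract_aut F \<longleftrightarrow> bij F \<and> (\<forall>x y. F (n6_mult x y) = n6_mult (F x) (F y))"

definition n6_central_aut :: "(n6 \<Rightarrow> n6) \<Rightarrow> bool" where
  "n6_central_aut F \<longleftrightarrow> n6_abstract_aut F \<and> (\<forall>x. n6_mult (n6_inv x) (F x) \<in> n6_center)"

definition n6_lie_aut :: "(n6 \<Rightarrow> n6) \<Rightarrow> bool" where
  "n6_lie_aut F \<longleftrightarrow> n6_abstract_aut F \<and> continuous_on UNIV F"

definition n6_ideal :: "n6 set \<Rightarrow> bool" where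
  "n6_ideal S \<longleftrightarrow> subspace S \<and> (\<forall>x\<in>S. \<forall>y. n6_bracket x y \<in> S)"

definition cmult :: "(n6 \<Rightarrow> n6) \<Rightarrow> complex \<Rightarrow> n6 \<Rightarrow> n6" where
  "cmult J z v = Re z *\<^sub>R v + Im z *\<^sub>R J v"

definition field_aut_C :: "(complex \<Rightarrow> complex) \<Rightarrow> bool" where
  "field_aut_C \<phi> \<longleftrightarrow> bij \<phi> \<and> (\<forall>x y. \<phi> (x + y) = \<phi> x + \<phi> y) \<and> (\<forall>x y. \<phi> (x * y) = \<phi> x * \<phi> y)"

text \<open>sigma acts on the ideal S (viewed as the realification of a complex Lie algebra via the
  complex structure J) by applying a field automorphism phi of C, fixing the structure
  constants, to the coordinates w.r.t. a C-basis es.\<close>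
definition complex_coord_map :: "n6 set \<Rightarrow> (n6 \<Rightarrow> n6) \<Rightarrow> bool" where
  "complex_coord_map S \<sigma> \<longleftrightarrow>
    (\<exists>J es \<phi> c.
       linear J \<and> J ` S \<subseteq> S \<and> (\<forall>x\<in>S. J (J x) = - x) \<and>
       (\<forall>x\<in>S. \<forall>y\<in>S. n6_bracket (J x) y = J (n6_bracket x y)) \<and>
       set es \<subseteq> S \<and>
       (\<forall>v\<in>S. \<exists>!zs. length zs = length es \<and>
                 v = (\<Sum>j<length es. cmult J (zs ! j) (es ! j))) \<and>
       (\<forall>j<length es. \<forall>k<length es.
           n6_bracket (es ! j) (es ! k) = (\<Sum>l<length es. cmult J (c j k l) (es ! l))) \<and>
       field_aut_C \<phi> \<and>
       (\<forall>j<length es. \<forall>k<length es. \<forall>l<length es. \<phi> (c j k l) = c j k l) \<and>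
       (\<forall>zs. length zs = length es \<longrightarrow>
          \<sigma> (\<Sum>j<length es. cmult J (zs ! j) (es ! j)) =
            (\<Sum>j<length es. cmult J (\<phi> (zs ! j)) (es ! j))))"

text \<open>Maps sigma = sigma_1 x ... x sigma_k for a decomposition of N_6 into ideals, where each
  sigma_i is the identity or (if N_i is the realification of a complex Lie algebra) given by a
  field automorphism of C as above. (Choosing phi = id recovers sigma_i = id.)\<close>
definition n6_field_sigma :: "(n6 \<Rightarrow> n6) \<Rightarrow> bool" where
  "n6_field_sigma \<sigma> \<longleftrightarrow>
    (\<exists>Ns :: n6 set list.
       (\<forall>i<length Ns. n6_ideal (Ns ! i)) \<and>
       (\<forall>v. \<exists>!vs. length vs = length Ns \<and> (\<forall>i<length Ns. vs ! i \<in> Ns ! i) \<and> v = sum_list vs) \<and>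
       (\<forall>vs. length vs = length Ns \<and> (\<forall>i<length Ns. vs ! i \<in> Ns ! i) \<longrightarrow>
             \<sigma> (sum_list vs) = sum_list (map \<sigma> vs)) \<and>
       (\<forall>i<length Ns. (\<forall>v\<in>Ns ! i. \<sigma> v = v) \<or> complex_coord_map (Ns ! i) \<sigma>))"

definition n6_field_aut :: "(n6 \<Rightarrow> n6) \<Rightarrow> bool" where
  "n6_field_aut \<Phi> \<longleftrightarrow> (\<exists>\<sigma>. n6_field_sigma \<sigma> \<and> \<Phi> = n6_exp \<circ> \<sigma> \<circ> n6_log)"

definition n6_partial_automatic_continuity :: bool where
  "n6_partial_automatic_continuity \<longleftrightarrow>
    (\<forall>F. n6_abstract_aut F \<longrightarrow>
       (\<exists>\<mu> Fb \<Phi>. n6_central_aut \<mu> \<and> n6_lie_aut Fb \<and> n6_field_aut \<Phi> \<and> F = \<mu> \<circ> Fb \<circ> \<Phi>))"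

end

theory Submission
  imports Defs "HOL-Computational_Algebra.Polynomial"
begin

(* A nonzero derivation D of the reals exists: a derivation of a subfield K of characteristic
   zero extends to K(x) for every x (uniquely if x is algebraic over K, with D x arbitrary
   otherwise), so by Zorn's lemma the derivation of Q(t) with D t = 1, t transcendental,
   extends to all of R.  Applying the ring automorphism a0 + a1 eps |-> a0 + (a1 + D a0) eps
   of R[eps] to all matrix entries gives an abstract automorphism of N_6 = Heis_3(R[eps]).

   Suppose it were mu o F o Phi.  Every field automorphism Phi of N_6 is the identity: in a
   decomposition of N_6 into ideals an abelian summand is zero (the centre is the derived
   algebra), and a non-abelian one contains the centre, hence is all of N_6, which carries no
   complex structure.  A central automorphism mu does not change the X- and Y-entries.  So F
   maps exp(rX) to an element with X-entry r + D(r) eps; as F is a continuous homomorphism,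
   r |-> (r, D r) is additive and continuous, hence R-linear, which forces D = 0. *)

section \<open>Extension of derivations\<close>

locale subfield =
  fixes K :: "'a::field set"
  assumes zero_mem [simp]: "0 \<in> K" and one_mem [simp]: "1 \<in> K"
    and add_mem: "a \<in> K \<Longrightarrow> b \<in> K \<Longrightarrow> a + b \<in> K"
    and mult_mem: "a \<in> K \<Longrightarrow> b \<in> K \<Longrightarrow> a * b \<in> K"
    and uminus_mem: "a \<in> K \<Longrightarrow> - a \<in> K"
    and inverse_mem: "a \<in> K \<Longrightarrow> inverse a \<in> K"
begin

lemma diff_mem: "a \<in> K \<Longrightarrow> b \<in> K \<Longrightarrow> a - b \<in> K"
  using add_mem uminus_mem by (metis diff_conv_add_uminus)

lemma divide_mem: "a \<in> K \<Longrightarrow> b \<in> K \<Longrightarrow> a / b \<in> K"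
  using mult_mem inverse_mem by (metis divide_inverse)

lemma of_nat_mem: "of_nat n \<in> K"
  by (induction n) (auto intro: add_mem)

lemma sum_mem: "(\<And>i. i \<in> A \<Longrightarrow> f i \<in> K) \<Longrightarrow> sum f A \<in> K"
  by (induction A rule: infinite_finite_induct) (auto intro: add_mem)

end

definition poly_over :: "'a::zero set \<Rightarrow> 'a poly \<Rightarrow> bool" where
  "poly_over K p \<longleftrightarrow> (\<forall>i. coeff p i \<in> K)"

context subfield
begin

lemma poly_over_add: "poly_over K p \<Longrightarrow> poly_over K q \<Longrightarrow> poly_over K (p + q)"
  by (simp add: poly_over_def add_mem)

lemma poly_over_uminus: "poly_over K p \<Longrightarrow> poly_over K (- p)"
  by (simp add: poly_over_def uminus_mem)

lemma poly_over_diff: "poly_over K p \<Longrightarrow> poly_over K q \<Longrightarrow> poly_over K (p - q)"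
  by (simp add: poly_over_def diff_mem)

lemma poly_over_mult: "poly_over K p \<Longrightarrow> poly_over K q \<Longrightarrow> poly_over K (p * q)"
  by (simp add: poly_over_def coeff_mult sum_mem mult_mem)

lemma poly_over_pderiv: "poly_over K p \<Longrightarrow> poly_over K (pderiv p)"
  by (simp add: poly_over_def coeff_pderiv mult_mem add_mem of_nat_mem)

lemma poly_over_monom: "a \<in> K \<Longrightarrow> poly_over K (monom a n)"
  by (simp add: poly_over_def coeff_monom)

lemma poly_over_const: "a \<in> K \<Longrightarrow> poly_over K [:a:]"
  by (simp add: poly_over_def coeff_pCons split: nat.split)

lemma poly_over_X: "poly_over K [:0, 1:]"
  by (simp add: poly_over_def coeff_pCons split: nat.split)

lemma poly_over_1: "poly_over K 1"
  by (simp add: poly_over_const one_pCons)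

lemmas poly_over_intros = poly_over_add poly_over_uminus poly_over_diff poly_over_mult
  poly_over_pderiv poly_over_monom poly_over_const poly_over_X poly_over_1

end

lemma degree_cancel_leading_term:
  fixes p m :: "'a::field poly"
  defines r_def: "r \<equiv> monom (lead_coeff p / lead_coeff m) (degree p - degree m) * m"
  assumes m: "m \<noteq> 0" and deg: "degree m \<le> degree p" and "p \<noteq> r"
  shows "degree (p - r) < degree p"
proof -
  have "degree r \<le> degree p"
    using degree_mult_le[of "monom (lead_coeff p / lead_coeff m) (degree p - degree m)" m]
      degree_monom_le[of "lead_coeff p / lead_coeff m" "degree p - degree m"] deg
    by (simp add: r_def)
  then have "degree (p - r) \<le> degree p"
    by (simp add: degree_diff_le)
  moreover have "coeff (p - r) (degree p) = 0"
    using m deg by (simp add: r_def coeff_monom_mult)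
  then have "degree (p - r) \<noteq> degree p"
    using \<open>p \<noteq> r\<close> by (metis leading_coeff_0_iff right_minus_eq)
  ultimately show ?thesis
    by simp
qed

locale field_derivation = subfield K for K :: "'a::field_char_0 set" +
  fixes d :: "'a \<Rightarrow> 'a"
  assumes der_add: "a \<in> K \<Longrightarrow> b \<in> K \<Longrightarrow> d (a + b) = d a + d b"
    and der_mult: "a \<in> K \<Longrightarrow> b \<in> K \<Longrightarrow> d (a * b) = a * d b + d a * b"
begin

lemma der_zero [simp]: "d 0 = 0"
  using der_add[of 0 0] by simp

lemma der_one [simp]: "d 1 = 0"
  using der_mult[of 1 1] by simp

lemma der_uminus: "a \<in> K \<Longrightarrow> d (- a) = - d a"
  using der_add[of a "- a"] uminus_mem by (simp add: add_eq_0_iff2)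

lemma der_sum: "(\<And>i. i \<in> A \<Longrightarrow> f i \<in> K) \<Longrightarrow> d (sum f A) = (\<Sum>i\<in>A. d (f i))"
  by (induction A rule: infinite_finite_induct) (auto simp: der_add sum_mem)

lemma map_poly_der_add:
  "poly_over K p \<Longrightarrow> poly_over K q \<Longrightarrow> map_poly d (p + q) = map_poly d p + map_poly d q"
  by (rule poly_eqI) (simp add: coeff_map_poly der_add poly_over_def)

lemma map_poly_der_uminus: "poly_over K p \<Longrightarrow> map_poly d (- p) = - map_poly d p"
  by (rule poly_eqI) (simp add: coeff_map_poly der_uminus poly_over_def)

lemma map_poly_der_mult:
  assumes p: "poly_over K p" and q: "poly_over K q"
  shows "map_poly d (p * q) = map_poly d p * q + p * map_poly d q"
proof (rule poly_eqI)
  fix n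
  have "coeff (map_poly d (p * q)) n = (\<Sum>i\<le>n. d (coeff p i * coeff q (n - i)))"
    using p q by (simp add: coeff_map_poly coeff_mult poly_over_def der_sum mult_mem)
  also have "\<dots> = (\<Sum>i\<le>n. d (coeff p i) * coeff q (n - i) + coeff p i * d (coeff q (n - i)))"
    using p q by (intro sum.cong refl) (simp add: der_mult poly_over_def)
  also have "\<dots> = coeff (map_poly d p * q + p * map_poly d q) n"
    by (simp add: coeff_mult coeff_map_poly sum.distrib)
  finally show "coeff (map_poly d (p * q)) n = coeff (map_poly d p * q + p * map_poly d q) n" .
qed

text \<open>If \<open>d\<close> extends to \<open>K[x]\<close> with \<open>d x = e\<close>, it must send \<open>poly p x\<close> to
  \<open>poly_der x e p\<close>.\<close>
definition poly_der :: "'a \<Rightarrow> 'a \<Rightarrow> 'a poly \<Rightarrow> 'a" where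
  "poly_der x e p = poly (map_poly d p) x + poly (pderiv p) x * e"

lemma poly_der_add:
  "poly_over K p \<Longrightarrow> poly_over K q \<Longrightarrow> poly_der x e (p + q) = poly_der x e p + poly_der x e q"
  by (simp add: poly_der_def map_poly_der_add pderiv_add algebra_simps)

lemma poly_der_diff:
  "poly_over K p \<Longrightarrow> poly_over K q \<Longrightarrow> poly_der x e (p - q) = poly_der x e p - poly_der x e q"
  using poly_der_add[of p "- q" x e] poly_over_uminus[of q]
  by (simp add: poly_der_def map_poly_der_uminus pderiv_minus)

lemma poly_der_mult:
  "poly_over K p \<Longrightarrow> poly_over K q \<Longrightarrow>
    poly_der x e (p * q) = poly_der x e p * poly q x + poly p x * poly_der x e q"
  by (simp add: poly_der_def map_poly_der_mult pderiv_mult algebra_simps)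

lemma poly_der_0 [simp]: "poly_der x e 0 = 0"
  by (simp add: poly_der_def)

lemma poly_der_const: "poly_der x e [:a:] = d a"
  by (simp add: poly_der_def map_poly_pCons)

lemma poly_der_1 [simp]: "poly_der x e 1 = 0"
  using poly_der_const[of x e 1] by (simp add: one_pCons)

lemma poly_der_X: "poly_der x e [:0, 1:] = e"
  by (simp add: poly_der_def map_poly_pCons pderiv_pCons)

definition compatible :: "'a \<Rightarrow> 'a \<Rightarrow> bool" where
  "compatible x e \<longleftrightarrow> (\<forall>p. poly_over K p \<longrightarrow> poly p x = 0 \<longrightarrow> poly_der x e p = 0)"

definition quotient_der :: "'a \<Rightarrow> 'a \<Rightarrow> 'a poly \<Rightarrow> 'a poly \<Rightarrow> 'a" where
  "quotient_der x e p q = (poly_der x e p * poly q x - poly p x * poly_der x e q) / (poly q x)\<^sup>2"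

lemma quotient_der_cong:
  assumes "compatible x e" and "poly_over K p" "poly_over K q" "poly_over K r" "poly_over K s"
    and q: "poly q x \<noteq> 0" and s: "poly s x \<noteq> 0" and eq: "poly p x / poly q x = poly r x / poly s x"
  shows "quotient_der x e p q = quotient_der x e r s"
proof -
  have "poly (p * s - r * q) x = 0"
    using q s eq by (simp add: field_simps)
  then have "poly_der x e (p * s - r * q) = 0"
    using assms(1-5) by (simp add: compatible_def poly_over_intros)
  then have der_eq: "poly_der x e p * poly s x + poly p x * poly_der x e s =
      poly_der x e r * poly q x + poly r x * poly_der x e q"
    using assms(2-5) by (simp add: poly_der_diff poly_der_mult poly_over_mult)
  have "poly p x * poly s x = poly r x * poly q x"
    using q s eq by (simp add: field_simps)
  with der_eq have "(poly_der x e p * poly q x - poly p x * poly_der x e q) * (poly s x)\<^sup>2 =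
      (poly_der x e r * poly s x - poly r x * poly_der x e s) * (poly q x)\<^sup>2"
    by algebra
  with q s show ?thesis
    by (simp add: quotient_der_def frac_eq_eq)
qed

lemma quotient_der_add:
  assumes "poly_over K p" "poly_over K q" "poly_over K r" "poly_over K s"
    and "poly q x \<noteq> 0" "poly s x \<noteq> 0"
  shows "quotient_der x e (p * s + r * q) (q * s) = quotient_der x e p q + quotient_der x e r s"
proof -
  have quotient_rule: "((Dp * S + P * Ds + (Dr * Q + R * Dq)) * (Q * S) - (P * S + R * Q) * (Dq * S + Q * Ds))
      / (Q * S)\<^sup>2 = (Dp * Q - P * Dq) / Q\<^sup>2 + (Dr * S - R * Ds) / S\<^sup>2"
    if "Q \<noteq> 0" "S \<noteq> 0" for P Q R S Dp Dq Dr Ds :: 'a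
    using that by (simp add: field_simps power2_eq_square)
  from assms show ?thesis
    unfolding quotient_der_def
    by (simp only: poly_der_add poly_der_mult poly_over_mult poly_add poly_mult) (rule quotient_rule)
qed

lemma quotient_der_mult:
  assumes "poly_over K p" "poly_over K q" "poly_over K r" "poly_over K s"
    and "poly q x \<noteq> 0" "poly s x \<noteq> 0"
  shows "quotient_der x e (p * r) (q * s) =
    poly p x / poly q x * quotient_der x e r s + quotient_der x e p q * (poly r x / poly s x)"
proof -
  have quotient_rule: "((Dp * R + P * Dr) * (Q * S) - (P * R) * (Dq * S + Q * Ds)) / (Q * S)\<^sup>2 =
      P / Q * ((Dr * S - R * Ds) / S\<^sup>2) + (Dp * Q - P * Dq) / Q\<^sup>2 * (R / S)"
    if "Q \<noteq> 0" "S \<noteq> 0" for P Q R S Dp Dq Dr Ds :: 'a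
    using that by (simp add: field_simps power2_eq_square)
  from assms show ?thesis
    unfolding quotient_der_def
    by (simp only: poly_der_mult poly_mult) (rule quotient_rule)
qed

definition simple_extension :: "'a \<Rightarrow> 'a set" where
  "simple_extension x =
    {poly p x / poly q x | p q. poly_over K p \<and> poly_over K q \<and> poly q x \<noteq> 0}"

lemma simple_extensionI:
  "poly_over K p \<Longrightarrow> poly_over K q \<Longrightarrow> poly q x \<noteq> 0 \<Longrightarrow>
    poly p x / poly q x \<in> simple_extension x"
  unfolding simple_extension_def by blast

lemma subset_simple_extension: "K \<subseteq> simple_extension x"
  using simple_extensionI[of "[:a:]" 1 x for a] by (auto simp: poly_over_const poly_over_1)

lemma mem_simple_extension: "x \<in> simple_extension x"
  using simple_extensionI[of "[:0, 1:]" 1 x] by (simp add: poly_over_X poly_over_1)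

lemma subfield_simple_extension: "subfield (simple_extension x)"
proof
  show "0 \<in> simple_extension x" "1 \<in> simple_extension x"
    using subset_simple_extension zero_mem one_mem by blast+
next
  fix a b assume "a \<in> simple_extension x" "b \<in> simple_extension x"
  then obtain p q r s where pqrs: "poly_over K p" "poly_over K q" "poly_over K r" "poly_over K s"
    and nz: "poly q x \<noteq> 0" "poly s x \<noteq> 0" and ab: "a = poly p x / poly q x" "b = poly r x / poly s x"
    unfolding simple_extension_def by blast
  have "a + b = poly (p * s + r * q) x / poly (q * s) x"
    using nz by (simp add: ab field_simps)
  also have "\<dots> \<in> simple_extension x"
    using pqrs nz by (intro simple_extensionI poly_over_intros) auto
  finally show "a + b \<in> simple_extension x" .
  have "a * b = poly (p * r) x / poly (q * s) x"
    using nz by (simp add: ab)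
  also have "\<dots> \<in> simple_extension x"
    using pqrs nz by (intro simple_extensionI poly_over_intros) auto
  finally show "a * b \<in> simple_extension x" .
next
  fix a assume "a \<in> simple_extension x"
  then obtain p q where pq: "poly_over K p" "poly_over K q"
    and nz: "poly q x \<noteq> 0" and a: "a = poly p x / poly q x"
    unfolding simple_extension_def by blast
  have "- a = poly (- p) x / poly q x"
    by (simp add: a)
  then show "- a \<in> simple_extension x"
    using pq nz by (simp add: simple_extensionI poly_over_uminus del: poly_minus)
  show "inverse a \<in> simple_extension x"
  proof (cases "poly p x = 0")
    case True
    then have "inverse a = 0"
      by (simp add: a)
    then show ?thesis
      using subset_simple_extension zero_mem by (metis subsetD)
  next
    case False
    then show ?thesis
      using simple_extensionI[OF pq(2,1) False] by (simp add: a)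
  qed
qed

definition extended_der :: "'a \<Rightarrow> 'a \<Rightarrow> 'a \<Rightarrow> 'a" where
  "extended_der x e y = (SOME v. \<exists>p q. poly_over K p \<and> poly_over K q \<and> poly q x \<noteq> 0 \<and>
      y = poly p x / poly q x \<and> v = quotient_der x e p q)"

lemma extended_der_eq:
  assumes "compatible x e" and pq: "poly_over K p" "poly_over K q" and nz: "poly q x \<noteq> 0"
  shows "extended_der x e (poly p x / poly q x) = quotient_der x e p q"
proof -
  let ?P = "\<lambda>v. \<exists>p' q'. poly_over K p' \<and> poly_over K q' \<and> poly q' x \<noteq> 0 \<and>
      poly p x / poly q x = poly p' x / poly q' x \<and> v = quotient_der x e p' q'"
  have "?P (quotient_der x e p q)"
    using pq nz by blast
  then have "?P (extended_der x e (poly p x / poly q x))"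
    unfolding extended_der_def by (rule someI)
  then obtain p' q' where "poly_over K p'" "poly_over K q'" "poly q' x \<noteq> 0"
    and "poly p x / poly q x = poly p' x / poly q' x"
    and "extended_der x e (poly p x / poly q x) = quotient_der x e p' q'"
    by blast
  with quotient_der_cong[OF assms(1) pq] nz show ?thesis
    by simp
qed

lemma field_derivation_simple_extension:
  assumes "compatible x e"
  shows "field_derivation (simple_extension x) (extended_der x e)"
proof -
  have "extended_der x e (a + b) = extended_der x e a + extended_der x e b \<and>
      extended_der x e (a * b) = a * extended_der x e b + extended_der x e a * b"
    if "a \<in> simple_extension x" "b \<in> simple_extension x" for a b
  proof -
    from that obtain p q r s where pqrs: "poly_over K p" "poly_over K q" "poly_over K r" "poly_over K s"
      and nz: "poly q x \<noteq> 0" "poly s x \<noteq> 0"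
      and ab: "a = poly p x / poly q x" "b = poly r x / poly s x"
      unfolding simple_extension_def by blast
    have ders: "extended_der x e a = quotient_der x e p q" "extended_der x e b = quotient_der x e r s"
      using assms pqrs nz by (simp_all add: ab extended_der_eq)
    have sum: "a + b = poly (p * s + r * q) x / poly (q * s) x"
      using nz by (simp add: ab field_simps)
    have "extended_der x e (a + b) = quotient_der x e (p * s + r * q) (q * s)"
      unfolding sum by (rule extended_der_eq) (use assms pqrs nz in \<open>simp_all add: poly_over_intros\<close>)
    also have "\<dots> = extended_der x e a + extended_der x e b"
      unfolding ders by (rule quotient_der_add[OF pqrs nz])
    finally have add: "extended_der x e (a + b) = extended_der x e a + extended_der x e b" .
    have prod: "a * b = poly (p * r) x / poly (q * s) x"
      by (simp add: ab)
    have "extended_der x e (a * b) = quotient_der x e (p * r) (q * s)"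
      unfolding prod by (rule extended_der_eq) (use assms pqrs nz in \<open>simp_all add: poly_over_intros\<close>)
    also have "\<dots> = a * extended_der x e b + extended_der x e a * b"
      unfolding ders unfolding ab by (rule quotient_der_mult[OF pqrs nz])
    finally show ?thesis
      using add by blast
  qed
  then show ?thesis
    by (intro field_derivation.intro subfield_simple_extension field_derivation_axioms.intro) auto
qed

lemma extended_der_restrict:
  assumes "compatible x e" and "a \<in> K"
  shows "extended_der x e a = d a"
proof -
  have "extended_der x e a = extended_der x e (poly [:a:] x / poly 1 x)"
    by simp
  also have "\<dots> = quotient_der x e [:a:] 1"
    using assms by (intro extended_der_eq poly_over_intros) auto
  finally show ?thesis
    by (simp add: quotient_der_def poly_der_const)
qed

lemma extended_der_generator:
  assumes "compatible x e"
  shows "extended_der x e x = e"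
proof -
  have "extended_der x e x = extended_der x e (poly [:0, 1:] x / poly 1 x)"
    by simp
  also have "\<dots> = quotient_der x e [:0, 1:] 1"
    using assms by (intro extended_der_eq poly_over_intros) auto
  finally show ?thesis
    by (simp add: quotient_der_def poly_der_X)
qed

lemma extend_to_simple_extension:
  assumes "compatible x e"
  shows "\<exists>K' d'. field_derivation K' d' \<and> K \<subseteq> K' \<and> (\<forall>a\<in>K. d' a = d a) \<and> x \<in> K' \<and> d' x = e"
  using assms field_derivation_simple_extension subset_simple_extension extended_der_restrict
    mem_simple_extension extended_der_generator
  by (intro exI[of _ "simple_extension x"] exI[of _ "extended_der x e"]) simp

lemma compatible_if_minimal_poly:
  assumes m: "poly_over K m" "poly m x = 0" "poly_der x e m = 0"
    and min: "\<And>q. poly_over K q \<Longrightarrow> q \<noteq> 0 \<Longrightarrow> poly q x = 0 \<Longrightarrow> degree m \<le> degree q"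
    and "m \<noteq> 0"
  shows "compatible x e"
  unfolding compatible_def
proof (intro allI impI)
  fix p assume "poly_over K p" "poly p x = 0"
  then show "poly_der x e p = 0"
  proof (induction "degree p" arbitrary: p rule: less_induct)
    case (less p)
    show ?case
    proof (cases "p = 0")
      case False
      define r where "r = monom (lead_coeff p / lead_coeff m) (degree p - degree m) * m"
      have deg: "degree m \<le> degree p"
        using min less.prems False by blast
      have "lead_coeff p / lead_coeff m \<in> K"
        using less.prems(1) m(1) by (simp add: poly_over_def divide_mem)
      then have r: "poly_over K r" "poly r x = 0" "poly_der x e r = 0"
        using m by (simp_all add: r_def poly_der_mult poly_over_intros)
      have "poly_der x e (p - r) = 0"
      proof (cases "p = r")
        case False
        with \<open>m \<noteq> 0\<close> deg have "degree (p - r) < degree p"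
          unfolding r_def by (rule degree_cancel_leading_term)
        moreover have "poly_over K (p - r)" "poly (p - r) x = 0"
          using less.prems r by (simp_all add: poly_over_diff)
        ultimately show ?thesis
          by (rule less.hyps)
      qed simp
      then show ?thesis
        using less.prems r by (simp add: poly_der_diff)
    qed simp
  qed
qed

lemma compatible_exists: "\<exists>e. compatible x e"
proof (cases "\<exists>p. poly_over K p \<and> p \<noteq> 0 \<and> poly p x = 0")
  case False
  then have "compatible x 0"
    by (auto simp: compatible_def)
  then show ?thesis ..
next
  case True
  then obtain m where "poly_over K m \<and> m \<noteq> 0 \<and> poly m x = 0"
    and min: "\<forall>q. poly_over K q \<and> q \<noteq> 0 \<and> poly q x = 0 \<longrightarrow> degree m \<le> degree q"
    using ex_has_least_nat[of "\<lambda>p. poly_over K p \<and> p \<noteq> 0 \<and> poly p x = 0" _ degree] by blast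
  then have m: "poly_over K m" "m \<noteq> 0" "poly m x = 0"
    by blast+
  have "degree m \<noteq> 0"
  proof
    assume "degree m = 0"
    with m show False
      by (auto elim!: degree_eq_zeroE)
  qed
  then have "pderiv m \<noteq> 0" and deg: "degree (pderiv m) < degree m"
    by (simp_all add: pderiv_eq_0_iff degree_pderiv)
  have nz: "poly (pderiv m) x \<noteq> 0"
  proof
    assume "poly (pderiv m) x = 0"
    with min poly_over_pderiv[OF m(1)] \<open>pderiv m \<noteq> 0\<close> deg show False
      by (meson leD)
  qed
  define e where "e = - poly (map_poly d m) x / poly (pderiv m) x"
  have "poly_der x e m = 0"
    using nz by (simp add: poly_der_def e_def)
  with m min have "compatible x e"
    by (intro compatible_if_minimal_poly) auto
  then show ?thesis ..
qed

end

text \<open>Derivations of subfields are handled through their graphs, so that the union of a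
  chain of them is again one and Zorn's lemma applies.\<close>
definition derivation_graph :: "('a::field_char_0 \<times> 'a) set \<Rightarrow> bool" where
  "derivation_graph G \<longleftrightarrow> single_valued G \<and> {0, 1} \<subseteq> Domain G \<and>
    (\<forall>a\<in>Domain G. - a \<in> Domain G \<and> inverse a \<in> Domain G) \<and>
    (\<forall>a da b db. (a, da) \<in> G \<longrightarrow> (b, db) \<in> G \<longrightarrow>
       (a + b, da + db) \<in> G \<and> (a * b, a * db + da * b) \<in> G)"

definition graph_fun :: "('a \<times> 'b) set \<Rightarrow> 'a \<Rightarrow> 'b" where
  "graph_fun G a = (THE b. (a, b) \<in> G)"

lemma graph_fun_eq: "single_valued G \<Longrightarrow> (a, b) \<in> G \<Longrightarrow> graph_fun G a = b"
  unfolding graph_fun_def by (blast dest: single_valuedD)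

lemma (in field_derivation) derivation_graph_graph: "derivation_graph ((\<lambda>a. (a, d a)) ` K)"
proof -
  have "Domain ((\<lambda>a. (a, d a)) ` K) = K"
    by force
  then show ?thesis
    unfolding derivation_graph_def single_valued_def
    by (auto simp: der_add der_mult add_mem mult_mem uminus_mem inverse_mem)
qed

lemma field_derivation_graph_fun:
  assumes "derivation_graph G"
  shows "field_derivation (Domain G) (graph_fun G)"
proof -
  have sv: "single_valued G" and closed: "\<And>a da b db. (a, da) \<in> G \<Longrightarrow> (b, db) \<in> G \<Longrightarrow>
      (a + b, da + db) \<in> G \<and> (a * b, a * db + da * b) \<in> G"
    using assms by (simp_all add: derivation_graph_def)
  have "subfield (Domain G)"
  proof
    show "0 \<in> Domain G" "1 \<in> Domain G"
      using assms by (simp_all add: derivation_graph_def)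
    show "- a \<in> Domain G" "inverse a \<in> Domain G" if "a \<in> Domain G" for a
      using assms that by (simp_all add: derivation_graph_def)
    fix a b assume "a \<in> Domain G" "b \<in> Domain G"
    then obtain da db where "(a, da) \<in> G" "(b, db) \<in> G"
      by blast
    from closed[OF this] show "a + b \<in> Domain G" "a * b \<in> Domain G"
      by blast+
  qed
  moreover have "graph_fun G (a + b) = graph_fun G a + graph_fun G b \<and>
      graph_fun G (a * b) = a * graph_fun G b + graph_fun G a * b"
    if "a \<in> Domain G" "b \<in> Domain G" for a b
  proof -
    from that obtain da db where "(a, da) \<in> G" "(b, db) \<in> G"
      by blast
    with closed[OF this] show ?thesis
      by (simp add: graph_fun_eq[OF sv])
  qed
  ultimately show ?thesis
    by (intro field_derivation.intro field_derivation_axioms.intro) auto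
qed

lemma derivation_graph_Union:
  assumes chain: "chain\<^sub>\<subseteq> C" and "C \<noteq> {}" and graphs: "\<And>G. G \<in> C \<Longrightarrow> derivation_graph G"
  shows "derivation_graph (\<Union>C)"
proof -
  have common: "\<exists>G\<in>C. p \<in> G \<and> q \<in> G" if "p \<in> \<Union>C" "q \<in> \<Union>C" for p q
    using finite_subset_Union_chain[of "{p, q}" C UNIV] chain that
    by (auto simp: chain_subset_alt_def)
  have "single_valued (\<Union>C)"
  proof (rule single_valuedI)
    fix a b c assume "(a, b) \<in> \<Union>C" "(a, c) \<in> \<Union>C"
    with common obtain G where "G \<in> C" "(a, b) \<in> G" "(a, c) \<in> G"
      by blast
    moreover from graphs[OF \<open>G \<in> C\<close>] have "single_valued G"
      by (simp add: derivation_graph_def)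
    ultimately show "b = c"
      by (blast dest: single_valuedD)
  qed
  moreover obtain G0 where "G0 \<in> C"
    using \<open>C \<noteq> {}\<close> by blast
  then have "{0, 1} \<subseteq> Domain (\<Union>C)"
    using graphs[OF \<open>G0 \<in> C\<close>] unfolding derivation_graph_def by blast
  moreover have "- a \<in> Domain (\<Union>C) \<and> inverse a \<in> Domain (\<Union>C)" if "a \<in> Domain (\<Union>C)" for a
  proof -
    from that obtain G where "G \<in> C" "a \<in> Domain G"
      by blast
    with graphs[OF \<open>G \<in> C\<close>] have "- a \<in> Domain G \<and> inverse a \<in> Domain G"
      by (simp add: derivation_graph_def)
    with \<open>G \<in> C\<close> show ?thesis
      by blast
  qed
  moreover have "(a + b, da + db) \<in> \<Union>C \<and> (a * b, a * db + da * b) \<in> \<Union>C"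
    if "(a, da) \<in> \<Union>C" "(b, db) \<in> \<Union>C" for a da b db
  proof -
    from common[OF that] obtain G where "G \<in> C" "(a, da) \<in> G" "(b, db) \<in> G"
      by blast
    with graphs[OF \<open>G \<in> C\<close>] show ?thesis
      unfolding derivation_graph_def by blast
  qed
  ultimately show ?thesis
    unfolding derivation_graph_def by blast
qed

lemma maximal_derivation_graph_total:
  assumes M: "derivation_graph M" and max: "\<And>G. derivation_graph G \<Longrightarrow> M \<subseteq> G \<Longrightarrow> G = M"
  shows "Domain M = UNIV"
proof (rule ccontr)
  assume "Domain M \<noteq> UNIV"
  then obtain x where x: "x \<notin> Domain M"
    by blast
  have FD: "field_derivation (Domain M) (graph_fun M)"
    using M by (rule field_derivation_graph_fun)
  obtain e where "field_derivation.compatible (Domain M) (graph_fun M) x e"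
    using field_derivation.compatible_exists[OF FD] ..
  from field_derivation.extend_to_simple_extension[OF FD this]
  obtain K' d' where K': "field_derivation K' d'" "Domain M \<subseteq> K'" "x \<in> K'"
    and d': "\<forall>a\<in>Domain M. d' a = graph_fun M a"
    by blast
  have sv: "single_valued M"
    using M by (simp add: derivation_graph_def)
  have "M \<subseteq> (\<lambda>a. (a, d' a)) ` K'"
  proof
    fix p assume "p \<in> M"
    then obtain a b where p: "p = (a, b)" "(a, b) \<in> M"
      by (cases p) auto
    then have "a \<in> Domain M"
      by blast
    with K'(2) d' graph_fun_eq[OF sv p(2)] have "a \<in> K'" "b = d' a"
      by auto
    with p show "p \<in> (\<lambda>a. (a, d' a)) ` K'"
      by blast
  qed
  with field_derivation.derivation_graph_graph[OF K'(1)]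
  have "(\<lambda>a. (a, d' a)) ` K' = M"
    by (rule max)
  with K'(3) have "(x, d' x) \<in> M"
    by blast
  with x show False
    by blast
qed

theorem (in field_derivation) derivation_extends_to_UNIV:
  "\<exists>D. field_derivation UNIV D \<and> (\<forall>a\<in>K. D a = d a)"
proof -
  define G\<^sub>0 where "G\<^sub>0 = (\<lambda>a. (a, d a)) ` K"
  define A where "A = {G. derivation_graph G \<and> G\<^sub>0 \<subseteq> G}"
  have "\<exists>M\<in>A. \<forall>G\<in>A. M \<subseteq> G \<longrightarrow> G = M"
  proof (rule subset_Zorn_nonempty)
    have "G\<^sub>0 \<in> A"
      by (simp add: A_def G\<^sub>0_def derivation_graph_graph)
    then show "A \<noteq> {}"
      by blast
    fix C assume "C \<noteq> {}" "subset.chain A C"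
    then have "chain\<^sub>\<subseteq> C" "C \<subseteq> A"
      by (simp_all add: chain_subset_def subset_chain_def)
    have "derivation_graph (\<Union>C)"
      using \<open>chain\<^sub>\<subseteq> C\<close> \<open>C \<noteq> {}\<close>
      by (rule derivation_graph_Union) (use \<open>C \<subseteq> A\<close> in \<open>auto simp: A_def\<close>)
    moreover have "G\<^sub>0 \<subseteq> \<Union>C"
      using \<open>C \<noteq> {}\<close> \<open>C \<subseteq> A\<close> by (auto simp: A_def)
    ultimately show "\<Union>C \<in> A"
      by (simp add: A_def)
  qed
  then obtain M where "M \<in> A" and maximal: "\<forall>G\<in>A. M \<subseteq> G \<longrightarrow> G = M"
    by blast
  then have M: "derivation_graph M" "G\<^sub>0 \<subseteq> M"
    by (simp_all add: A_def)
  have max: "G = M" if "derivation_graph G" "M \<subseteq> G" for G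
    using maximal that M(2) by (auto simp: A_def)
  have "field_derivation UNIV (graph_fun M)"
    using field_derivation_graph_fun[OF M(1)] maximal_derivation_graph_total[OF M(1) max] by simp
  moreover have "graph_fun M a = d a" if "a \<in> K" for a
  proof -
    have "(a, d a) \<in> M"
      using M(2) that by (auto simp: G\<^sub>0_def)
    moreover have "single_valued M"
      using M(1) by (simp add: derivation_graph_def)
    ultimately show ?thesis
      by (simp add: graph_fun_eq)
  qed
  ultimately show ?thesis
    by blast
qed

section \<open>Derivations of the reals\<close>

lemma transcendental_real_exists: "\<exists>t::real. \<forall>p. poly_over \<rat> p \<longrightarrow> poly p t = 0 \<longrightarrow> p = 0"
proof -
  define P where "P = {p :: real poly. poly_over \<rat> p \<and> p \<noteq> 0}"
  have "countable (coeffs ` P)"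
    by (rule countable_subset[OF _ countable_lists[OF countable_rat]])
      (auto simp: P_def poly_over_def coeffs_def)
  moreover have "inj_on coeffs P"
    by (rule inj_onI) (simp add: coeffs_eq_iff)
  ultimately have "countable P"
    by (rule countable_image_inj_on)
  then have "countable (\<Union>p\<in>P. {x. poly p x = 0})"
    by (rule countable_UN) (auto simp: P_def intro: countable_finite poly_roots_finite)
  with uncountable_UNIV_real have "(\<Union>p\<in>P. {x. poly p x = 0}) \<noteq> UNIV"
    by auto
  then obtain t where "t \<notin> (\<Union>p\<in>P. {x. poly p x = 0})"
    by blast
  then show ?thesis
    by (auto simp: P_def)
qed

theorem real_derivation_exists: "\<exists>D :: real \<Rightarrow> real. field_derivation UNIV D \<and> (\<exists>t. D t \<noteq> 0)"
proof -
  from transcendental_real_exists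
  obtain t :: real where t: "\<forall>p. poly_over \<rat> p \<longrightarrow> poly p t = 0 \<longrightarrow> p = 0" ..
  have Q: "field_derivation (\<rat> :: real set) (\<lambda>_. 0)"
    by unfold_locales (simp_all add: Rats_add Rats_mult)
  have "field_derivation.compatible \<rat> (\<lambda>_. 0) t 1"
    unfolding field_derivation.compatible_def[OF Q]
  proof (intro allI impI)
    fix p assume "poly_over \<rat> p" "poly p t = 0"
    with t have "p = 0"
      by blast
    then show "field_derivation.poly_der (\<lambda>_. 0) t 1 p = 0"
      by (simp add: field_derivation.poly_der_0[OF Q])
  qed
  with Q obtain K d where "field_derivation K d" "t \<in> K" "d t = 1"
    using field_derivation.extend_to_simple_extension by blast
  moreover from \<open>field_derivation K d\<close> obtain D where "field_derivation UNIV D" "\<forall>a\<in>K. D a = d a"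
    using field_derivation.derivation_extends_to_UNIV by blast
  ultimately have "field_derivation UNIV D" "D t \<noteq> 0"
    by simp_all
  then show ?thesis
    by blast
qed

section \<open>Field automorphisms of \<open>N\<^sub>6\<close>\<close>

lemma sum_list_eq_nth:
  fixes xs :: "'a::comm_monoid_add list"
  assumes "i < length xs" and "\<And>j. j < length xs \<Longrightarrow> j \<noteq> i \<Longrightarrow> xs ! j = 0"
  shows "sum_list xs = xs ! i"
proof -
  have "sum_list xs = (\<Sum>j\<in>{0..<length xs}. xs ! j)"
    by (rule sum_list_sum_nth)
  also have "\<dots> = (\<Sum>j\<in>{i}. xs ! j)"
    using assms by (intro sum.mono_neutral_right) auto
  finally show ?thesis
    by simp
qed

lemma n6_bracket_eq: "n6_bracket u v = (0, 0, dmul (fst u) (fst (snd v)) - dmul (fst v) (fst (snd u)))"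
  by (simp add: n6_bracket_def split: prod.splits)

lemma n6_bracket_add_right: "n6_bracket s (u + v) = n6_bracket s u + n6_bracket s v"
  by (simp add: n6_bracket_eq dmul_def algebra_simps)

lemma n6_bracket_zero_right: "n6_bracket s 0 = 0"
  by (simp add: n6_bracket_eq dmul_def zero_prod_def)

lemma n6_bracket_swap: "n6_bracket v u = - n6_bracket u v"
  by (simp add: n6_bracket_eq)

lemma n6_bracket_sum_list_right: "n6_bracket s (sum_list vs) = sum_list (map (n6_bracket s) vs)"
  by (induction vs) (simp_all add: n6_bracket_add_right n6_bracket_zero_right)

lemma n6_bracket_eq_0_if_real_parts_0:
  assumes "fst (fst y) = 0" "fst (fst (snd y)) = 0" "fst (fst z) = 0" "fst (fst (snd z)) = 0"
  shows "n6_bracket y z = 0"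
  using assms by (simp add: n6_bracket_eq dmul_def zero_prod_def)

lemma n6_bracket_left_zero_iff: "(\<forall>v. n6_bracket y v = 0) \<longleftrightarrow> fst y = 0 \<and> fst (snd y) = 0"
proof
  assume "\<forall>v. n6_bracket y v = 0"
  then have "n6_bracket y ((0, 0), (1, 0), 0) = 0" "n6_bracket y ((1, 0), 0, 0) = 0"
    by blast+
  then show "fst y = 0 \<and> fst (snd y) = 0"
    by (simp add: n6_bracket_eq dmul_def prod_eq_iff)
qed (simp add: n6_bracket_eq dmul_def zero_prod_def)

lemma n6_ideal_contains_center:
  assumes S: "n6_ideal S" and x: "x \<in> S" and real_part: "fst (fst x) \<noteq> 0 \<or> fst (fst (snd x)) \<noteq> 0"
  shows "(0, 0, c) \<in> S"
proof -
  obtain a0 a1 b0 b1 c0 c1 where x_eq: "x = ((a0, a1), (b0, b1), c0, c1)"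
    by (metis prod.collapse)
  have "\<exists>y. n6_bracket x y = (0, 0, c)"
  proof (cases "a0 = 0")
    case False
    show ?thesis
      by (rule exI[of _ "(0, (fst c / a0, (snd c - a1 * fst c / a0) / a0), 0)"])
        (use False in \<open>simp add: x_eq n6_bracket_eq dmul_def prod_eq_iff field_simps\<close>)
  next
    case True
    with real_part have "b0 \<noteq> 0"
      by (simp add: x_eq)
    show ?thesis
      by (rule exI[of _ "((- fst c / b0, (b1 * fst c / b0 - snd c) / b0), 0, 0)"])
        (use True \<open>b0 \<noteq> 0\<close> in \<open>simp add: x_eq n6_bracket_eq dmul_def prod_eq_iff field_simps\<close>)
  qed
  with S x show ?thesis
    unfolding n6_ideal_def by metis
qed

lemma n6_no_complex_structure:
  assumes J: "linear J" "\<And>x. J (J x) = - x" "\<And>x y. n6_bracket (J x) y = J (n6_bracket x y)"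
  shows False
proof -
  define Z :: n6 where "Z = (0, 0, 0, 1)"
  define \<mu> where "\<mu> = fst (fst (J ((1, 0), 0, 0)))"
  have "J Z = J (n6_bracket ((1, 0), 0, 0) (0, (0, 1), 0))"
    by (simp add: Z_def n6_bracket_eq dmul_def)
  also have "\<dots> = n6_bracket (J ((1, 0), 0, 0)) (0, (0, 1), 0)"
    by (rule J(3)[symmetric])
  also have "\<dots> = \<mu> *\<^sub>R Z"
    by (simp add: Z_def \<mu>_def n6_bracket_eq dmul_def)
  finally have "J (J Z) = (\<mu> * \<mu>) *\<^sub>R Z"
    using linear_scale[OF J(1)] by simp
  then have "(\<mu> * \<mu>) *\<^sub>R Z = - Z"
    using J(2) by simp
  then have "\<mu> * \<mu> = -1"
    by (simp add: Z_def)
  moreover have "\<mu> * \<mu> \<ge> 0"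
    by simp
  ultimately show False
    by simp
qed

locale n6_ideal_decomposition =
  fixes Ns :: "n6 set list"
  assumes ideals: "\<And>i. i < length Ns \<Longrightarrow> n6_ideal (Ns ! i)"
    and unique_decomposition:
      "\<And>v. \<exists>!vs. length vs = length Ns \<and> (\<forall>i<length Ns. vs ! i \<in> Ns ! i) \<and> v = sum_list vs"
begin

definition decomposes :: "n6 list \<Rightarrow> n6 \<Rightarrow> bool" where
  "decomposes vs v \<longleftrightarrow> length vs = length Ns \<and> (\<forall>i<length Ns. vs ! i \<in> Ns ! i) \<and> v = sum_list vs"

lemma ex1_decomposes: "\<exists>!vs. decomposes vs v"
  unfolding decomposes_def by (rule unique_decomposition)

lemma decomposition_exists: obtains vs where "decomposes vs v"
  using ex1_decomposes by blast

lemma decomposition_unique: "decomposes vs v \<Longrightarrow> decomposes ws v \<Longrightarrow> vs = ws"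
  using ex1_decomposes by blast

lemma zero_mem_summand: "i < length Ns \<Longrightarrow> 0 \<in> Ns ! i"
  using ideals unfolding n6_ideal_def by (blast intro: subspace_0)

lemma summand_bracket_left: "i < length Ns \<Longrightarrow> x \<in> Ns ! i \<Longrightarrow> n6_bracket x y \<in> Ns ! i"
  using ideals unfolding n6_ideal_def by blast

lemma summand_bracket_right: "i < length Ns \<Longrightarrow> x \<in> Ns ! i \<Longrightarrow> n6_bracket y x \<in> Ns ! i"
  using summand_bracket_left ideals n6_bracket_swap by (metis n6_ideal_def subspace_neg)

lemma decomposes_single:
  assumes "i < length Ns" and "z \<in> Ns ! i"
  shows "decomposes ((replicate (length Ns) 0)[i := z]) z"
proof -
  have "sum_list ((replicate (length Ns) 0)[i := z]) = (replicate (length Ns) 0)[i := z] ! i"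
    using assms(1) by (intro sum_list_eq_nth) simp_all
  with assms zero_mem_summand show ?thesis
    by (auto simp: decomposes_def nth_list_update)
qed

lemma summand_inter_zero:
  assumes "i < length Ns" "j < length Ns" "i \<noteq> j" and "z \<in> Ns ! i" "z \<in> Ns ! j"
  shows "z = 0"
proof -
  have "(replicate (length Ns) 0)[i := z] = (replicate (length Ns) 0)[j := z]"
    using assms decomposes_single decomposition_unique by blast
  then have "(replicate (length Ns) 0)[i := z] ! i = (replicate (length Ns) 0)[j := z] ! i"
    by simp
  with assms show ?thesis
    by simp
qed

lemma bracket_summand_component:
  assumes i: "i < length Ns" and s: "s \<in> Ns ! i" and vs: "decomposes vs v"
  shows "n6_bracket s v = n6_bracket s (vs ! i)"
proof -
  have "n6_bracket s v = sum_list (map (n6_bracket s) vs)"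
    using vs by (simp add: decomposes_def n6_bracket_sum_list_right)
  also have "\<dots> = n6_bracket s (vs ! i)"
  proof (rule trans[OF sum_list_eq_nth])
    fix j assume "j < length (map (n6_bracket s) vs)" "j \<noteq> i"
    with i s vs show "map (n6_bracket s) vs ! j = 0"
      by (auto simp: decomposes_def intro: summand_inter_zero summand_bracket_left summand_bracket_right)
  qed (use i vs in \<open>simp_all add: decomposes_def\<close>)
  finally show ?thesis .
qed

lemma bracket_in_summand_component:
  assumes i: "i < length Ns" and uv: "n6_bracket u v \<in> Ns ! i" and ws: "decomposes ws v"
  shows "n6_bracket u v = n6_bracket u (ws ! i)"
proof -
  have "decomposes (map (n6_bracket u) ws) (n6_bracket u v)"
    using ws by (simp add: decomposes_def n6_bracket_sum_list_right summand_bracket_right)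
  then have "map (n6_bracket u) ws = (replicate (length Ns) 0)[i := n6_bracket u v]"
    using decomposes_single[OF i uv] decomposition_unique by blast
  then have "map (n6_bracket u) ws ! i = n6_bracket u v"
    using i by simp
  with i ws show ?thesis
    by (simp add: decomposes_def)
qed

lemma abelian_summand_zero:
  assumes i: "i < length Ns" and abelian: "\<And>y z. y \<in> Ns ! i \<Longrightarrow> z \<in> Ns ! i \<Longrightarrow> n6_bracket y z = 0"
    and x: "x \<in> Ns ! i"
  shows "x = 0"
proof -
  have central: "fst y = 0 \<and> fst (snd y) = 0" if y: "y \<in> Ns ! i" for y
  proof -
    have "n6_bracket y v = 0" for v
    proof -
      obtain vs where vs: "decomposes vs v"
        by (rule decomposition_exists)
      with i y have "n6_bracket y v = n6_bracket y (vs ! i)"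
        by (rule bracket_summand_component)
      also have "\<dots> = 0"
        using abelian y vs i by (simp add: decomposes_def)
      finally show ?thesis .
    qed
    then show ?thesis
      using n6_bracket_left_zero_iff by blast
  qed
  text \<open>The summand is central, but every central element is a bracket, whose component in
    the summand vanishes.\<close>
  define X :: n6 where "X = ((1, 0), 0, 0)"
  define Y :: n6 where "Y = (0, snd (snd x), 0)"
  have "n6_bracket X Y = x"
    using central[OF x] by (simp add: X_def Y_def n6_bracket_eq dmul_def prod_eq_iff)
  obtain ws where ws: "decomposes ws Y"
    by (rule decomposition_exists)
  have "x = n6_bracket X (ws ! i)"
    using bracket_in_summand_component[OF i _ ws] \<open>n6_bracket X Y = x\<close> x by simp
  also have "\<dots> = 0"
    using central[of "ws ! i"] ws i by (simp add: decomposes_def X_def n6_bracket_eq dmul_def zero_prod_def)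
  finally show ?thesis .
qed

lemma summand_containing_center:
  assumes i: "i < length Ns" and center: "\<And>c. (0, 0, c) \<in> Ns ! i"
  shows "v \<in> Ns ! i"
proof -
  obtain vs where vs: "decomposes vs v"
    by (rule decomposition_exists)
  have "vs ! j = 0" if j: "j < length Ns" "j \<noteq> i" for j
  proof -
    have w: "vs ! j \<in> Ns ! j"
      using vs j(1) by (simp add: decomposes_def)
    have "n6_bracket (vs ! j) y = 0" for y
    proof (rule summand_inter_zero[OF j(1) i j(2)])
      show "n6_bracket (vs ! j) y \<in> Ns ! j"
        using j(1) w by (rule summand_bracket_left)
      show "n6_bracket (vs ! j) y \<in> Ns ! i"
        unfolding n6_bracket_eq by (rule center)
    qed
    then have "fst (vs ! j) = 0 \<and> fst (snd (vs ! j)) = 0"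
      by (simp only: n6_bracket_left_zero_iff[symmetric]) blast
    then have "vs ! j = (0, 0, snd (snd (vs ! j)))"
      by (simp add: prod_eq_iff)
    also have "\<dots> \<in> Ns ! i"
      by (rule center)
    finally show ?thesis
      using summand_inter_zero[OF j(1) i j(2) w] by simp
  qed
  then have "sum_list vs = vs ! i"
    using vs i by (intro sum_list_eq_nth) (simp_all add: decomposes_def)
  moreover have "vs ! i \<in> Ns ! i" "v = sum_list vs"
    using vs i by (simp_all add: decomposes_def)
  ultimately show ?thesis
    by simp
qed

lemma complex_summand_zero:
  assumes i: "i < length Ns" and J: "linear J" "J ` (Ns ! i) \<subseteq> Ns ! i"
    "\<forall>x\<in>Ns ! i. J (J x) = - x" "\<forall>x\<in>Ns ! i. \<forall>y\<in>Ns ! i. n6_bracket (J x) y = J (n6_bracket x y)"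
    and x: "x \<in> Ns ! i"
  shows "x = 0"
proof (cases "\<forall>y\<in>Ns ! i. \<forall>z\<in>Ns ! i. n6_bracket y z = 0")
  case True
  with i x show ?thesis
    using abelian_summand_zero by blast
next
  case False
  then obtain y z where yz: "y \<in> Ns ! i" "z \<in> Ns ! i" "n6_bracket y z \<noteq> 0"
    by blast
  then obtain w where "w \<in> Ns ! i" "fst (fst w) \<noteq> 0 \<or> fst (fst (snd w)) \<noteq> 0"
    using n6_bracket_eq_0_if_real_parts_0 by blast
  then have "(0, 0, c) \<in> Ns ! i" for c
    using ideals[OF i] by (rule n6_ideal_contains_center[rotated])
  then have "v \<in> Ns ! i" for v
    using i summand_containing_center by blast
  with J have False
    by (intro n6_no_complex_structure[of J]) auto
  then show ?thesis ..
qed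

lemma complex_coord_map_summand_fixed:
  assumes i: "i < length Ns" and \<sigma>: "complex_coord_map (Ns ! i) \<sigma>" and w: "w \<in> Ns ! i"
  shows "\<sigma> w = w"
proof -
  obtain J es \<phi> where J: "linear J" "J ` (Ns ! i) \<subseteq> Ns ! i" "\<forall>x\<in>Ns ! i. J (J x) = - x"
      "\<forall>x\<in>Ns ! i. \<forall>y\<in>Ns ! i. n6_bracket (J x) y = J (n6_bracket x y)"
    and "field_aut_C \<phi>"
    and coords: "\<And>zs. length zs = length es \<Longrightarrow>
      \<sigma> (\<Sum>j<length es. cmult J (zs ! j) (es ! j)) = (\<Sum>j<length es. cmult J (\<phi> (zs ! j)) (es ! j))"
    using \<sigma> unfolding complex_coord_map_def by blast
  have "w = 0"
    using complex_summand_zero[OF i J w] .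
  moreover have "\<phi> (0 + 0) = \<phi> 0 + \<phi> 0"
    using \<open>field_aut_C \<phi>\<close> unfolding field_aut_C_def by blast
  then have "\<phi> 0 = 0"
    by simp
  then have "\<sigma> 0 = 0"
    using coords[of "replicate (length es) 0"] by (simp add: cmult_def)
  ultimately show ?thesis
    by simp
qed

end

lemma n6_field_sigma_id:
  assumes "n6_field_sigma \<sigma>"
  shows "\<sigma> v = v"
proof -
  obtain Ns where ideals: "\<forall>i<length Ns. n6_ideal (Ns ! i)"
    and unique: "\<forall>v. \<exists>!vs. length vs = length Ns \<and> (\<forall>i<length Ns. vs ! i \<in> Ns ! i) \<and> v = sum_list vs"
    and additive: "\<forall>vs. length vs = length Ns \<and> (\<forall>i<length Ns. vs ! i \<in> Ns ! i) \<longrightarrow>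
      \<sigma> (sum_list vs) = sum_list (map \<sigma> vs)"
    and summands: "\<forall>i<length Ns. (\<forall>v\<in>Ns ! i. \<sigma> v = v) \<or> complex_coord_map (Ns ! i) \<sigma>"
    using assms unfolding n6_field_sigma_def by blast
  interpret n6_ideal_decomposition Ns
    using ideals unique by unfold_locales blast+
  obtain vs where vs: "decomposes vs v"
    by (rule decomposition_exists)
  have "\<sigma> (vs ! i) = vs ! i" if "i < length vs" for i
  proof -
    from that vs have "i < length Ns" "vs ! i \<in> Ns ! i"
      by (simp_all add: decomposes_def)
    with summands complex_coord_map_summand_fixed show ?thesis
      by blast
  qed
  then have "map \<sigma> vs = vs"
    by (intro nth_equalityI) simp_all
  with additive vs show ?thesis
    by (simp add: decomposes_def)
qed

lemma n6_field_aut_id: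
  assumes "n6_field_aut \<Phi>"
  shows "\<Phi> u = u"
proof -
  obtain \<sigma> where "n6_field_sigma \<sigma>" and "\<Phi> = n6_exp \<circ> \<sigma> \<circ> n6_log"
    using assms unfolding n6_field_aut_def by blast
  then have "\<Phi> u = n6_exp (n6_log u)"
    by (simp add: n6_field_sigma_id)
  also have "\<dots> = u"
    by (cases u) (simp add: n6_exp_def n6_log_def)
  finally show ?thesis .
qed

section \<open>Automorphisms of \<open>N\<^sub>6\<close>\<close>

lemma n6_center_fst:
  assumes "z \<in> n6_center"
  shows "fst z = 0 \<and> fst (snd z) = 0"
proof -
  have "n6_mult ((1, 0), 0, 0) z = n6_mult z ((1, 0), 0, 0)"
    "n6_mult (0, (1, 0), 0) z = n6_mult z (0, (1, 0), 0)"
    using assms unfolding n6_center_def by blast+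
  then show ?thesis
    by (cases z) (simp add: n6_mult_def dmul_def prod_eq_iff)
qed

lemma n6_central_aut_fst:
  assumes "n6_central_aut \<mu>"
  shows "fst (\<mu> y) = fst y"
proof -
  have "n6_mult (n6_inv y) (\<mu> y) \<in> n6_center"
    using assms unfolding n6_central_aut_def by blast
  then have "fst (n6_mult (n6_inv y) (\<mu> y)) = 0"
    using n6_center_fst by blast
  moreover have "fst (n6_mult (n6_inv y) (\<mu> y)) = fst (\<mu> y) - fst y"
    by (simp add: n6_mult_def n6_inv_def split: prod.splits)
  ultimately show ?thesis
    by simp
qed

lemma continuous_additive_real_linear:
  fixes g :: "real \<Rightarrow> 'a::real_normed_vector"
  assumes cont: "continuous_on UNIV g" and add: "\<And>x y. g (x + y) = g x + g y"
  shows "g x = x *\<^sub>R g 1"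
proof -
  interpret additive g
    by unfold_locales (rule add)
  have nat: "g (of_nat n * y) = of_nat n *\<^sub>R g y" for n y
    by (induction n) (simp_all add: distrib_right add scaleR_add_left zero)
  have int: "g (of_int m * y) = of_int m *\<^sub>R g y" for m y
    using nat[of "nat \<bar>m\<bar>" y] minus[of "of_nat (nat \<bar>m\<bar>) * y"]
    by (cases "m \<ge> 0") (simp_all add: abs_if)
  have "g q = q *\<^sub>R g 1" if "q \<in> \<rat>" for q
  proof -
    from that obtain a b where "b > 0" and q: "q = of_int a / of_int b"
      using Rats_cases' by blast
    then have "of_int b *\<^sub>R g q = of_int a *\<^sub>R g 1"
      using int[of b q] int[of a 1] by simp
    also have "\<dots> = of_int b *\<^sub>R (q *\<^sub>R g 1)"
      using \<open>b > 0\<close> by (simp add: q)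
    finally show ?thesis
      using \<open>b > 0\<close> by (metis scaleR_cancel_left of_int_0_less_iff less_irrefl)
  qed
  then have "\<rat> \<subseteq> {x. g x = x *\<^sub>R g 1}"
    by blast
  moreover have "closed {x. g x = x *\<^sub>R g 1}"
    by (intro closed_Collect_eq cont continuous_on_scaleR continuous_on_id continuous_on_const)
  ultimately have "closure \<rat> \<subseteq> {x. g x = x *\<^sub>R g 1}"
    by (rule closure_minimal)
  then show ?thesis
    unfolding Rats_closure_real by blast
qed

lemma n6_lie_aut_fst_linear:
  assumes "n6_lie_aut F"
  shows "fst (F ((r, 0), 0, 0)) = r *\<^sub>R fst (F ((1, 0), 0, 0))"
proof (rule continuous_additive_real_linear)
  have hom: "F (n6_mult x y) = n6_mult (F x) (F y)" for x y
    using assms unfolding n6_lie_aut_def n6_abstract_aut_def by blast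
  have fst_mult: "fst (n6_mult x y) = fst x + fst y" for x y
    by (simp add: n6_mult_def split: prod.splits)
  show "fst (F ((r + s, 0), 0, 0)) = fst (F ((r, 0), 0, 0)) + fst (F ((s, 0), 0, 0))"
    for r s :: real
  proof -
    have "((r + s, 0), 0, 0) = n6_mult ((r, 0), 0, 0) ((s, 0), 0, 0)"
      by (simp add: n6_mult_def dmul_def zero_prod_def)
    then show ?thesis
      by (simp only: hom fst_mult)
  qed
  have "continuous_on UNIV F"
    using assms by (simp add: n6_lie_aut_def)
  moreover have "continuous_on UNIV (\<lambda>r::real. ((r, 0::real), 0::dual, 0::dual))"
    by (intro continuous_intros)
  ultimately have "continuous_on UNIV (F \<circ> (\<lambda>r. ((r, 0), 0, 0)))"
    using continuous_on_compose continuous_on_subset by blast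
  then show "continuous_on UNIV (\<lambda>r. fst (F ((r, 0), 0, 0)))"
    unfolding comp_def by (rule continuous_on_fst)
qed

definition dual_twist :: "(real \<Rightarrow> real) \<Rightarrow> dual \<Rightarrow> dual" where
  "dual_twist D a = (fst a, snd a + D (fst a))"

definition n6_twist :: "(real \<Rightarrow> real) \<Rightarrow> n6 \<Rightarrow> n6" where
  "n6_twist D = map_prod (dual_twist D) (map_prod (dual_twist D) (dual_twist D))"

lemma dual_twist_inverse:
  "dual_twist (\<lambda>x. - D x) \<circ> dual_twist D = id" "dual_twist D \<circ> dual_twist (\<lambda>x. - D x) = id"
  by (simp_all add: fun_eq_iff dual_twist_def)

lemma n6_abstract_aut_twist:
  assumes D: "field_derivation UNIV D"
  shows "n6_abstract_aut (n6_twist D)"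
  unfolding n6_abstract_aut_def
proof
  show "bij (n6_twist D)"
    by (rule o_bij[of "n6_twist (\<lambda>x. - D x)"])
      (simp_all add: n6_twist_def dual_twist_inverse prod.map_id0 flip: map_prod_compose)
  have add: "dual_twist D (a + b) = dual_twist D a + dual_twist D b" for a b
    using field_derivation.der_add[OF D] by (simp add: dual_twist_def)
  have mult: "dual_twist D (dmul a b) = dmul (dual_twist D a) (dual_twist D b)" for a b
    using field_derivation.der_mult[OF D] by (simp add: dual_twist_def dmul_def algebra_simps)
  show "\<forall>x y. n6_twist D (n6_mult x y) = n6_mult (n6_twist D x) (n6_twist D y)"
    by (simp add: n6_twist_def n6_mult_def add mult split: prod.splits)
qed

theorem proposition4p2:
  shows "\<not> n6_partial_automatic_continuity"
proof
  assume "n6_partial_automatic_continuity"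
  obtain D :: "real \<Rightarrow> real" and t where D: "field_derivation UNIV D" and "D t \<noteq> 0"
    using real_derivation_exists by blast
  from D have "n6_abstract_aut (n6_twist D)"
    by (rule n6_abstract_aut_twist)
  with \<open>n6_partial_automatic_continuity\<close>
  obtain \<mu> F \<Phi> where \<mu>: "n6_central_aut \<mu>" and F: "n6_lie_aut F" and \<Phi>: "n6_field_aut \<Phi>"
    and twist: "n6_twist D = \<mu> \<circ> F \<circ> \<Phi>"
    unfolding n6_partial_automatic_continuity_def by blast
  have "fst (F u) = fst (n6_twist D u)" for u
    using n6_central_aut_fst[OF \<mu>] n6_field_aut_id[OF \<Phi>] by (simp add: twist)
  then have "(r, D r) = r *\<^sub>R (1, D 1)" for r
    using n6_lie_aut_fst_linear[OF F, of r] by (simp add: n6_twist_def dual_twist_def)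
  from this[of t] have "D t = t * D 1"
    by simp
  with D \<open>D t \<noteq> 0\<close> show False
    by (simp add: field_derivation.der_one)
qed

end
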